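(* Let $a<b$ with $[a,b]\subset[0,\infty)$, let $f,g:[a,b]\to\mathbb{R}$ be integrable with $0\le g(t)\le1$ for all $t\in[a,b]$ and such that $\int_a^b g(t)f'(t)\,dt$ exists. Suppose $f$ is absolutely continuous on $[a,b]$ and $|f'|^q$ is $s$-concave on $[a,b]$ for some fixed $s\in(0,1]$ and some $q>1$. Let $\lambda:=\int_a^b g(t)\,dt$. Then $$\left|\int_a^{a+\lambda} f(t)\,dt-\int_a^b f(t)g(t)\,dt\right|\le2^{(s-1)/q}\left[\lambda^2\left|f'\!\left(a+\tfrac{\lambda}{2}\right)\right|+(b-a-\lambda)^2\left|f'\!\left(\tfrac{a+b+\lambda}{2}\right)\right|\right],$$ and $$\left|\int_a^b f(t)g(t)\,dt-\int_{b-\lambda}^b f(t)\,dt\right|\le2^{(s-1)/q}\left[\lambda^2\left|f'\!\left(b-\tfrac{\lambda}{2}\right)\right|+(b-a-\lambda)^2\left|f'\!\left(\tfrac{a+b-\lambda}{2}\right)\right|\right].$$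
   Context: For fixed $s\in(0,1]$, a function $h:I\to\mathbb{R}$ on an interval $I\subset[0,\infty)$ is $s$-concave (in the second sense) if $h(\alpha x+\beta y)\ge\alpha^s h(x)+\beta^s h(y)$ for all $x,y\in I$ and all $\alpha,\beta\ge0$ with $\alpha+\beta=1$. *)

theory Defs
  imports "HOL-Analysis.Analysis"
begin

definition abs_continuous_on :: "real \<Rightarrow> real \<Rightarrow> (real \<Rightarrow> real) \<Rightarrow> bool" where
  "abs_continuous_on a b f \<longleftrightarrow>
     (\<forall>\<epsilon>>0. \<exists>\<delta>>0. \<forall>(n::nat) (u::nat \<Rightarrow> real) v.
        (\<forall>i<n. a \<le> u i \<and> u i \<le> v i \<and> v i \<le> b) \<and>
        (\<forall>i<n. \<forall>j<n. i \<noteq> j \<longrightarrow> v i \<le> u j \<or> v j \<le> u i) \<and>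
        (\<Sum>i<n. v i - u i) < \<delta>
        \<longrightarrow> (\<Sum>i<n. \<bar>f (v i) - f (u i)\<bar>) < \<epsilon>)"

definition s_concave_on :: "real \<Rightarrow> real set \<Rightarrow> (real \<Rightarrow> real) \<Rightarrow> bool" where
  "s_concave_on s I h \<longleftrightarrow>
     (\<forall>x\<in>I. \<forall>y\<in>I. \<forall>\<alpha> \<beta>. \<alpha> \<ge> 0 \<and> \<beta> \<ge> 0 \<and> \<alpha> + \<beta> = 1 \<longrightarrow>
        h (\<alpha> * x + \<beta> * y) \<ge> \<alpha> powr s * h x + \<beta> powr s * h y)"

end

theory Submission
  imports Defs
begin

text \<open>
  Put \<open>m = a + \<lambda>\<close>. The weight \<open>w = indicator {a..m} - g\<close> has integral zero and \<open>\<bar>w\<bar> \<le> 1\<close>,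
  so the difference of the two integrals is \<open>\<integral> (f t - f m) w t\<close>, bounded by the integral of
  \<open>\<bar>f t - f m\<bar>\<close>. Comparing \<open>t\<close> with its reflection \<open>c + d - t\<close>, s-concavity of \<open>\<bar>f'\<bar> powr q\<close>
  gives \<open>\<bar>f' t\<bar> \<le> 2 powr (s/q) * \<bar>f' ((c + d) / 2)\<bar>\<close> on any \<open>[c, d]\<close>; as \<open>f\<close> is absolutely
  continuous with derivative \<open>f'\<close> almost everywhere, \<open>f\<close> is Lipschitz with this constant on
  \<open>[a, m]\<close> and on \<open>[m, b]\<close>. Integrating the two linear bounds yields the factor
  \<open>2 powr (s/q) / 2\<close>, which is at most \<open>2 powr ((s - 1)/q)\<close> because \<open>q \<ge> 1\<close>.
  The second inequality is the same argument with \<open>m = b - \<lambda>\<close>.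
\<close>

section \<open>Absolutely continuous functions\<close>

lemma abs_continuous_on_imp_continuous_on:
  fixes f :: "real \<Rightarrow> real"
  assumes "abs_continuous_on a b f"
  shows "continuous_on {a..b} f"
  unfolding continuous_on_iff
proof (intro ballI allI impI)
  fix x e :: real
  assume x: "x \<in> {a..b}" and "e > 0"
  obtain \<delta> where "\<delta> > 0" and \<delta>: "\<forall>(n::nat) u v. (\<forall>i<n. a \<le> u i \<and> u i \<le> v i \<and> v i \<le> b) \<and>
      (\<forall>i<n. \<forall>j<n. i \<noteq> j \<longrightarrow> v i \<le> u j \<or> v j \<le> u i) \<and> (\<Sum>i<n. v i - u i) < \<delta> \<longrightarrow>
      (\<Sum>i<n. \<bar>f (v i) - f (u i)\<bar>) < e"
    using assms \<open>e > 0\<close> unfolding abs_continuous_on_def by blast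
  have "dist (f y) (f x) < e" if y: "y \<in> {a..b}" "dist y x < \<delta>" for y
  proof -
    have "\<bar>f (max x y) - f (min x y)\<bar> < e"
      by (rule \<delta>[rule_format, of 1 "\<lambda>_. min x y" "\<lambda>_. max x y", simplified])
        (use x y in \<open>auto simp: dist_real_def\<close>)
    then show ?thesis
      by (simp add: dist_real_def max_def min_def abs_minus_commute split: if_splits)
  qed
  with \<open>\<delta> > 0\<close> show "\<exists>d>0. \<forall>y\<in>{a..b}. dist y x < d \<longrightarrow> dist (f y) (f x) < e"
    by blast
qed

lemma interior_disjoint_intervals_ordered:
  fixes u v u' v' :: real
  assumes "u < v" "u' < v'" "interior {u..v} \<inter> interior {u'..v'} = {}"
  shows "v \<le> u' \<or> v' \<le> u"
proof (rule ccontr)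
  assume "\<not> ?thesis"
  then have "(max u u' + min v v') / 2 \<in> interior {u..v} \<inter> interior {u'..v'}"
    using assms(1,2) by auto
  with assms(3) show False by blast
qed

lemma abs_continuous_on_interval_family:
  fixes f :: "real \<Rightarrow> real"
  assumes "abs_continuous_on a b f" "e > 0"
  obtains \<delta> where "\<delta> > 0"
    "\<And>D. finite D \<Longrightarrow> (\<And>K. K \<in> D \<Longrightarrow> K = {Inf K..Sup K} \<and> a \<le> Inf K \<and> Inf K < Sup K \<and> Sup K \<le> b) \<Longrightarrow>
       (\<And>K K'. K \<in> D \<Longrightarrow> K' \<in> D \<Longrightarrow> K \<noteq> K' \<Longrightarrow> interior K \<inter> interior K' = {}) \<Longrightarrow>
       (\<Sum>K\<in>D. Sup K - Inf K) < \<delta> \<Longrightarrow> (\<Sum>K\<in>D. \<bar>f (Sup K) - f (Inf K)\<bar>) < e"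
proof -
  obtain \<delta> where "\<delta> > 0" and \<delta>: "\<forall>(n::nat) u v. (\<forall>i<n. a \<le> u i \<and> u i \<le> v i \<and> v i \<le> b) \<and>
      (\<forall>i<n. \<forall>j<n. i \<noteq> j \<longrightarrow> v i \<le> u j \<or> v j \<le> u i) \<and> (\<Sum>i<n. v i - u i) < \<delta> \<longrightarrow>
      (\<Sum>i<n. \<bar>f (v i) - f (u i)\<bar>) < e"
    using assms unfolding abs_continuous_on_def by blast
  have "(\<Sum>K\<in>D. \<bar>f (Sup K) - f (Inf K)\<bar>) < e"
    if "finite D" and K: "\<And>K. K \<in> D \<Longrightarrow> K = {Inf K..Sup K} \<and> a \<le> Inf K \<and> Inf K < Sup K \<and> Sup K \<le> b"
      and disjoint: "\<And>K K'. K \<in> D \<Longrightarrow> K' \<in> D \<Longrightarrow> K \<noteq> K' \<Longrightarrow> interior K \<inter> interior K' = {}"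
      and small: "(\<Sum>K\<in>D. Sup K - Inf K) < \<delta>" for D
  proof -
    obtain h where h: "bij_betw h {..<card D} D"
      using ex_bij_betw_nat_finite lessThan_atLeast0 \<open>finite D\<close> by metis
    have hD: "h i \<in> D" if "i < card D" for i
      using h that unfolding bij_betw_def by auto
    have bounds: "\<forall>i<card D. a \<le> Inf (h i) \<and> Inf (h i) \<le> Sup (h i) \<and> Sup (h i) \<le> b"
      using K hD by (meson less_imp_le)
    have ordered: "\<forall>i<card D. \<forall>j<card D. i \<noteq> j \<longrightarrow> Sup (h i) \<le> Inf (h j) \<or> Sup (h j) \<le> Inf (h i)"
    proof (intro allI impI)
      fix i j assume ij: "i < card D" "j < card D" "i \<noteq> j"
      then have "h i \<noteq> h j"
        using h unfolding bij_betw_def inj_on_def by auto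
      then have "interior (h i) \<inter> interior (h j) = {}"
        using disjoint hD ij(1,2) by blast
      then show "Sup (h i) \<le> Inf (h j) \<or> Sup (h j) \<le> Inf (h i)"
        using K[OF hD[OF ij(1)]] K[OF hD[OF ij(2)]]
        by (intro interior_disjoint_intervals_ordered) auto
    qed
    have total: "(\<Sum>i<card D. Sup (h i) - Inf (h i)) < \<delta>"
      using small sum.reindex_bij_betw[OF h, of "\<lambda>K. Sup K - Inf K"] by simp
    have "(\<Sum>K\<in>D. \<bar>f (Sup K) - f (Inf K)\<bar>) = (\<Sum>i<card D. \<bar>f (Sup (h i)) - f (Inf (h i))\<bar>)"
      by (rule sum.reindex_bij_betw[OF h, symmetric])
    also have "\<dots> < e"
      by (rule \<delta>[rule_format, OF conjI[OF bounds conjI[OF ordered total]]])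
    finally show ?thesis .
  qed
  with \<open>\<delta> > 0\<close> show thesis by (rule that)
qed

lemma abs_continuous_on_division:
  fixes f :: "real \<Rightarrow> real"
  assumes "abs_continuous_on a b f" "e > 0"
  obtains \<delta> where "\<delta> > 0"
    "\<And>D. D division_of \<Union>D \<Longrightarrow> \<Union>D \<subseteq> {a..b} \<Longrightarrow> (\<Sum>K\<in>D. measure lebesgue K) < \<delta> \<Longrightarrow>
       (\<Sum>K\<in>D. \<bar>f (Sup K) - f (Inf K)\<bar>) < e"
proof (rule abs_continuous_on_interval_family[OF assms])
  fix \<delta> :: real
  assume "\<delta> > 0" and \<delta>: "\<And>D. finite D \<Longrightarrow>
      (\<And>K. K \<in> D \<Longrightarrow> K = {Inf K..Sup K} \<and> a \<le> Inf K \<and> Inf K < Sup K \<and> Sup K \<le> b) \<Longrightarrow>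
      (\<And>K K'. K \<in> D \<Longrightarrow> K' \<in> D \<Longrightarrow> K \<noteq> K' \<Longrightarrow> interior K \<inter> interior K' = {}) \<Longrightarrow>
      (\<Sum>K\<in>D. Sup K - Inf K) < \<delta> \<Longrightarrow> (\<Sum>K\<in>D. \<bar>f (Sup K) - f (Inf K)\<bar>) < e"
  have "(\<Sum>K\<in>D. \<bar>f (Sup K) - f (Inf K)\<bar>) < e"
    if D: "D division_of \<Union>D" "\<Union>D \<subseteq> {a..b}" "(\<Sum>K\<in>D. measure lebesgue K) < \<delta>" for D
  proof -
    have interval: "\<exists>u v. u \<le> v \<and> K = {u..v}" if "K \<in> D" for K
      using division_ofD(3,4)[OF D(1) that] by (metis atLeastatMost_empty_iff2 box_real(2) linorder_linear)
    define D' where "D' = {K\<in>D. measure lebesgue K \<noteq> 0}"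
    have K: "K = {Inf K..Sup K} \<and> a \<le> Inf K \<and> Inf K < Sup K \<and> Sup K \<le> b \<and>
        measure lebesgue K = Sup K - Inf K" if "K \<in> D'" for K
    proof -
      have "K \<in> D" "measure lebesgue K \<noteq> 0"
        using that by (simp_all add: D'_def)
      obtain u v where "u \<le> v" "K = {u..v}"
        using interval \<open>K \<in> D\<close> by blast
      moreover have "u \<noteq> v"
        using \<open>K = {u..v}\<close> \<open>measure lebesgue K \<noteq> 0\<close> by auto
      moreover have "K \<subseteq> {a..b}"
        using \<open>K \<in> D\<close> D(2) by blast
      ultimately show ?thesis by auto
    qed
    have "(\<Sum>K\<in>D'. Sup K - Inf K) = (\<Sum>K\<in>D'. measure lebesgue K)"
      using K by simp
    also have "\<dots> \<le> (\<Sum>K\<in>D. measure lebesgue K)"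
      using D(1) unfolding D'_def by (intro sum_mono2) auto
    finally have small: "(\<Sum>K\<in>D'. Sup K - Inf K) < \<delta>"
      using D(3) by linarith
    have "(\<Sum>K\<in>D. \<bar>f (Sup K) - f (Inf K)\<bar>) = (\<Sum>K\<in>D'. \<bar>f (Sup K) - f (Inf K)\<bar>)"
    proof (rule sum.mono_neutral_right)
      show "\<forall>K\<in>D - D'. \<bar>f (Sup K) - f (Inf K)\<bar> = 0"
      proof
        fix K assume "K \<in> D - D'"
        then have "K \<in> D" "measure lebesgue K = 0" by (simp_all add: D'_def)
        then obtain u where "K = {u..u}"
          using interval by fastforce
        then show "\<bar>f (Sup K) - f (Inf K)\<bar> = 0" by simp
      qed
    qed (use D(1) in \<open>auto simp: D'_def\<close>)
    also have "\<dots> < e"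
    proof (rule \<delta>[OF _ _ _ small])
      show "finite D'"
        using D(1) by (auto simp: D'_def)
      show "K = {Inf K..Sup K} \<and> a \<le> Inf K \<and> Inf K < Sup K \<and> Sup K \<le> b" if "K \<in> D'" for K
        using K[OF that] by blast
      show "interior K \<inter> interior K' = {}" if "K \<in> D'" "K' \<in> D'" "K \<noteq> K'" for K K'
        using division_ofD(5)[OF D(1)] that unfolding D'_def by blast
    qed
    finally show ?thesis .
  qed
  with \<open>\<delta> > 0\<close> show thesis by (rule that)
qed

lemma negligible_open_cover:
  assumes "negligible N" "\<delta> > 0"
  obtains U where "open U" "N \<subseteq> U" "U \<in> lmeasurable" "measure lebesgue U < \<delta>"
proof -
  have N: "N \<in> null_sets lebesgue" "N \<in> lmeasurable"
    using assms(1) by (simp_all add: negligible_iff_null_sets negligible_imp_measurable)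
  obtain U where U: "open U" "N \<subseteq> U" "U - N \<in> lmeasurable" "emeasure lebesgue (U - N) < ennreal \<delta>"
    using sets_lebesgue_outer_open[OF null_setsD2[OF N(1)] assms(2)] by blast
  have "U = (U - N) \<union> N"
    using U(2) by blast
  then have "U \<in> lmeasurable"
    using U(3) N(2) by (metis fmeasurable.Un)
  moreover have "measure lebesgue U = measure lebesgue (U - N)"
    using measure_Diff_null_set[OF fmeasurableD[OF \<open>U \<in> lmeasurable\<close>] N(1)] by simp
  moreover have "measure lebesgue (U - N) < \<delta>"
    using U(4) emeasure_eq_measure2[OF U(3)] assms(2) by (simp add: ennreal_less_iff)
  ultimately show thesis
    using that U(1,2) by simp
qed

lemma abs_continuous_on_negligible_cover:
  fixes f :: "real \<Rightarrow> real"
  assumes "abs_continuous_on a b f" "e > 0" "negligible N"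
  obtains U where "open U" "N \<subseteq> U"
    "\<And>p. p tagged_partial_division_of {a..b} \<Longrightarrow> (\<And>x K. (x, K) \<in> p \<Longrightarrow> K \<subseteq> U) \<Longrightarrow>
       (\<Sum>(x, K)\<in>p. \<bar>f (Sup K) - f (Inf K)\<bar>) < e"
proof -
  obtain \<delta> where "\<delta> > 0" and \<delta>: "\<And>D. D division_of \<Union>D \<Longrightarrow> \<Union>D \<subseteq> {a..b} \<Longrightarrow>
      (\<Sum>K\<in>D. measure lebesgue K) < \<delta> \<Longrightarrow> (\<Sum>K\<in>D. \<bar>f (Sup K) - f (Inf K)\<bar>) < e"
    using abs_continuous_on_division[OF assms(1,2)] by blast
  obtain U where U: "open U" "N \<subseteq> U" "U \<in> lmeasurable" "measure lebesgue U < \<delta>"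
    using negligible_open_cover[OF assms(3) \<open>\<delta> > 0\<close>] by blast
  have "(\<Sum>(x, K)\<in>p. \<bar>f (Sup K) - f (Inf K)\<bar>) < e"
    if p: "p tagged_partial_division_of {a..b}" and pU: "\<And>x K. (x, K) \<in> p \<Longrightarrow> K \<subseteq> U" for p
  proof -
    \<comment> \<open>The guard is needed because \<open>Sup {}\<close> and \<open>Inf {}\<close> are unspecified reals.\<close>
    let ?d = "\<lambda>K. if K = {} then 0 else \<bar>f (Sup K) - f (Inf K)\<bar>"
    have D: "snd ` p division_of \<Union>(snd ` p)"
      by (rule partial_division_of_tagged_division[OF p])
    have DU: "\<Union>(snd ` p) \<subseteq> {a..b} \<inter> U"
      using tagged_partial_division_ofD(3)[OF p] pU by fastforce
    have "(\<Sum>(x, K)\<in>p. \<bar>f (Sup K) - f (Inf K)\<bar>) = (\<Sum>(x, K)\<in>p. ?d K)"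
      using tagged_partial_division_ofD(2)[OF p] by (intro sum.cong) fastforce+
    also have "\<dots> = (\<Sum>K\<in>snd ` p. ?d K)"
      by (rule sum.over_tagged_division_lemma[OF tagged_partial_division_of_Union_self[OF p]])
        (auto simp: box_eq_empty)
    also have "\<dots> = (\<Sum>K\<in>snd ` p. \<bar>f (Sup K) - f (Inf K)\<bar>)"
      using division_ofD(3)[OF D] by (intro sum.cong) auto
    also have "\<dots> < e"
    proof (rule \<delta>[OF D])
      show "\<Union>(snd ` p) \<subseteq> {a..b}"
        using DU by blast
      have "(\<Sum>K\<in>snd ` p. measure lebesgue K) = measure lebesgue (\<Union>(snd ` p))"
        by (rule content_division[OF D])
      also have "\<dots> \<le> measure lebesgue U"
        using DU lmeasurable_division[OF D] U(3) by (intro measure_mono_fmeasurable) auto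
      finally show "(\<Sum>K\<in>snd ` p. measure lebesgue K) < \<delta>"
        using U(4) by linarith
    qed
    finally show ?thesis .
  qed
  with U(1,2) show thesis
    by (rule that)
qed

lemma has_real_derivative_within_straddle:
  fixes f :: "real \<Rightarrow> real"
  assumes "(f has_real_derivative D) (at x within S)" "e > 0"
  obtains r where "r > 0"
    "\<And>u v. u \<in> S \<Longrightarrow> v \<in> S \<Longrightarrow> u \<le> x \<Longrightarrow> x \<le> v \<Longrightarrow> {u..v} \<subseteq> ball x r \<Longrightarrow>
       \<bar>f v - f u\<bar> \<le> (\<bar>D\<bar> + e) * (v - u)"
proof -
  obtain r where "r > 0" and r: "\<And>y. y \<in> S \<Longrightarrow> \<bar>y - x\<bar> < r \<Longrightarrow>
      \<bar>f y - f x - D * (y - x)\<bar> \<le> e * \<bar>y - x\<bar>"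
    using assms unfolding has_field_derivative_def has_derivative_within_alt
    by (auto simp: real_norm_def)
  have "\<bar>f v - f u\<bar> \<le> (\<bar>D\<bar> + e) * (v - u)"
    if "u \<in> S" "v \<in> S" "u \<le> x" "x \<le> v" "{u..v} \<subseteq> ball x r" for u v
  proof -
    have "u \<in> ball x r" "v \<in> ball x r"
      using that(3-5) by (auto simp: subset_eq)
    then have "\<bar>f u - f x - D * (u - x)\<bar> \<le> e * (x - u)" "\<bar>f v - f x - D * (v - x)\<bar> \<le> e * (v - x)"
      using r[of u] r[of v] that(1-4) by (auto simp: dist_real_def)
    moreover have "\<bar>D * (v - u)\<bar> = \<bar>D\<bar> * (v - u)"
      using that(3,4) by (simp add: abs_mult)
    ultimately show ?thesis
      by (simp add: algebra_simps)
  qed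
  with \<open>r > 0\<close> show thesis
    by (rule that)
qed

lemma has_real_derivative_straddle_gauge:
  fixes f f' :: "real \<Rightarrow> real"
  assumes "\<forall>x\<in>S - N. (f has_real_derivative f' x) (at x within S)" "e > 0"
  obtains r where "\<And>x. r x > 0"
    "\<And>x u v. x \<in> S - N \<Longrightarrow> u \<in> S \<Longrightarrow> v \<in> S \<Longrightarrow> u \<le> x \<Longrightarrow> x \<le> v \<Longrightarrow>
       {u..v} \<subseteq> ball x (r x) \<Longrightarrow> \<bar>f v - f u\<bar> \<le> (\<bar>f' x\<bar> + e) * (v - u)"
proof -
  have "\<exists>r>0. x \<in> S - N \<longrightarrow> (\<forall>u v. u \<in> S \<longrightarrow> v \<in> S \<longrightarrow> u \<le> x \<longrightarrow> x \<le> v \<longrightarrow>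
      {u..v} \<subseteq> ball x r \<longrightarrow> \<bar>f v - f u\<bar> \<le> (\<bar>f' x\<bar> + e) * (v - u))" for x
  proof (cases "x \<in> S - N")
    case True
    then show ?thesis
      using has_real_derivative_within_straddle[OF assms(1)[rule_format, OF True] assms(2)] by metis
  qed (use zero_less_one in blast)
  then obtain r where "\<And>x. r x > 0" and "\<And>x u v. x \<in> S - N \<Longrightarrow> u \<in> S \<Longrightarrow> v \<in> S \<Longrightarrow>
      u \<le> x \<Longrightarrow> x \<le> v \<Longrightarrow> {u..v} \<subseteq> ball x (r x) \<Longrightarrow> \<bar>f v - f u\<bar> \<le> (\<bar>f' x\<bar> + e) * (v - u)"
    by metis
  then show thesis
    by (rule that)
qed

lemma tagged_interval_straddle_bound:
  fixes f :: "real \<Rightarrow> real"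
  assumes p: "p tagged_division_of {c..d}" and "(x, K) \<in> p" "{c..d} \<subseteq> S" "K \<subseteq> ball x r"
    and straddle: "\<And>u v. u \<in> S \<Longrightarrow> v \<in> S \<Longrightarrow> u \<le> x \<Longrightarrow> x \<le> v \<Longrightarrow> {u..v} \<subseteq> ball x r \<Longrightarrow>
      \<bar>f v - f u\<bar> \<le> L * (v - u)"
  shows "\<bar>f (Sup K) - f (Inf K)\<bar> \<le> L * measure lborel K"
proof -
  obtain u v where K: "K = {u..v}" "x \<in> K" "K \<subseteq> {c..d}"
    using tagged_division_ofD(2-4)[OF p \<open>(x, K) \<in> p\<close>] by (metis box_real(2))
  then have "u \<le> x" "x \<le> v" "u \<in> S" "v \<in> S"
    using \<open>{c..d} \<subseteq> S\<close> by auto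
  then have "\<bar>f v - f u\<bar> \<le> L * (v - u)"
    using straddle \<open>K \<subseteq> ball x r\<close> K(1) by blast
  then show ?thesis
    using K(1) \<open>u \<le> x\<close> \<open>x \<le> v\<close> by simp
qed

lemma tagged_division_sum_le_content:
  fixes g :: "real set \<Rightarrow> real"
  assumes p: "p tagged_division_of {c..d}" and "c \<le> d" "q \<subseteq> p" "0 \<le> L"
    and g: "\<And>x K. (x, K) \<in> q \<Longrightarrow> g K \<le> L * measure lborel K"
  shows "(\<Sum>(x, K)\<in>q. g K) \<le> L * (d - c)"
proof -
  have "(\<Sum>(x, K)\<in>q. g K) \<le> (\<Sum>(x, K)\<in>q. L * measure lborel K)"
    using g by (intro sum_mono) auto
  also have "\<dots> \<le> (\<Sum>(x, K)\<in>p. L * measure lborel K)"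
    using p \<open>q \<subseteq> p\<close> \<open>0 \<le> L\<close> by (intro sum_mono2) auto
  also have "\<dots> = L * (d - c)"
    using additive_content_tagged_division[of p c d] p \<open>c \<le> d\<close>
    by (simp add: sum_distrib_left[symmetric] case_prod_unfold)
  finally show ?thesis .
qed

text \<open>
  Gauge argument: intervals tagged in the null set \<open>N\<close> lie in a small open cover of \<open>N\<close>, where
  absolute continuity controls their contribution; every other interval is controlled by the
  derivative at its tag.
\<close>

lemma abs_continuous_on_diff_le_approx:
  fixes f f' :: "real \<Rightarrow> real"
  assumes ac: "abs_continuous_on a b f" and cd: "a \<le> c" "c \<le> d" "d \<le> b"
    and N: "negligible N"
    and der: "\<forall>x\<in>{a..b} - N. (f has_real_derivative f' x) (at x within {a..b})"
    and bound: "\<And>x. x \<in> {c..d} \<Longrightarrow> \<bar>f' x\<bar> \<le> M" and "e > 0"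
  shows "\<bar>f d - f c\<bar> \<le> (M + e) * (d - c) + e"
proof -
  obtain U where U: "open U" "N \<subseteq> U" and small: "\<And>p. p tagged_partial_division_of {a..b} \<Longrightarrow>
      (\<And>x K. (x, K) \<in> p \<Longrightarrow> K \<subseteq> U) \<Longrightarrow> (\<Sum>(x, K)\<in>p. \<bar>f (Sup K) - f (Inf K)\<bar>) < e"
    using abs_continuous_on_negligible_cover[OF ac \<open>e > 0\<close> N] by blast
  obtain r where r_pos: "\<And>x. r x > 0" and straddle: "\<And>x u v. x \<in> {a..b} - N \<Longrightarrow>
      u \<in> {a..b} \<Longrightarrow> v \<in> {a..b} \<Longrightarrow> u \<le> x \<Longrightarrow> x \<le> v \<Longrightarrow> {u..v} \<subseteq> ball x (r x) \<Longrightarrow>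
      \<bar>f v - f u\<bar> \<le> (\<bar>f' x\<bar> + e) * (v - u)"
    using has_real_derivative_straddle_gauge[OF der \<open>e > 0\<close>] by blast
  define \<gamma> where "\<gamma> x = (if x \<in> N then U else ball x (r x))" for x
  have "gauge \<gamma>"
    using U r_pos unfolding gauge_def \<gamma>_def by auto
  then obtain p where p: "p tagged_division_of {c..d}" "\<gamma> fine p"
    using fine_division_exists_real by blast
  define p1 where "p1 = {(x, K) \<in> p. x \<in> N}"
  have fin: "finite p"
    using p(1) by blast
  have "p tagged_partial_division_of {c..d}"
    using p(1) by (simp add: tagged_division_of_def)
  then have "p1 tagged_partial_division_of {c..d}"
    by (rule tagged_partial_division_subset) (auto simp: p1_def)
  then have p1: "p1 tagged_partial_division_of {a..b}"
    using cd unfolding tagged_partial_division_of_def by (meson atLeastatMost_subset_iff order_trans)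
  have "\<bar>f d - f c\<bar> = \<bar>\<Sum>(x, K)\<in>p. f (Sup K) - f (Inf K)\<bar>"
    using additive_tagged_division_1[OF cd(2) p(1), of f] by simp
  also have "\<dots> \<le> (\<Sum>(x, K)\<in>p. \<bar>f (Sup K) - f (Inf K)\<bar>)"
    by (rule sum_abs[THEN order_trans]) (simp add: case_prod_unfold)
  also have "\<dots> = (\<Sum>(x, K)\<in>p - p1. \<bar>f (Sup K) - f (Inf K)\<bar>) + (\<Sum>(x, K)\<in>p1. \<bar>f (Sup K) - f (Inf K)\<bar>)"
    by (rule sum.subset_diff) (auto simp: p1_def fin)
  also have "\<dots> \<le> (M + e) * (d - c) + e"
  proof (rule add_mono)
    have term_bound: "\<bar>f (Sup K) - f (Inf K)\<bar> \<le> (M + e) * measure lborel K" if xK: "(x, K) \<in> p - p1" for x K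
    proof -
      have "(x, K) \<in> p" "x \<notin> N"
        using xK by (auto simp: p1_def)
      have "x \<in> {c..d}"
        using tagged_division_ofD(2,3)[OF p(1) \<open>(x, K) \<in> p\<close>] by blast
      have "K \<subseteq> \<gamma> x"
        using p(2) \<open>(x, K) \<in> p\<close> unfolding fine_def by blast
      then have "K \<subseteq> ball x (r x)"
        using \<open>x \<notin> N\<close> by (simp add: \<gamma>_def)
      then have "\<bar>f (Sup K) - f (Inf K)\<bar> \<le> (\<bar>f' x\<bar> + e) * measure lborel K"
        using \<open>(x, K) \<in> p\<close> \<open>x \<notin> N\<close> cd straddle[of x]
        by (intro tagged_interval_straddle_bound[OF p(1)]) auto
      also have "\<dots> \<le> (M + e) * measure lborel K"
        using bound[OF \<open>x \<in> {c..d}\<close>] by (intro mult_right_mono) auto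
      finally show ?thesis .
    qed
    have "0 \<le> M + e"
      using bound[of c] cd \<open>e > 0\<close> by force
    then show "(\<Sum>(x, K)\<in>p - p1. \<bar>f (Sup K) - f (Inf K)\<bar>) \<le> (M + e) * (d - c)"
      by (rule tagged_division_sum_le_content[OF p(1) cd(2) Diff_subset _ term_bound])
    have "K \<subseteq> U" if "(x, K) \<in> p1" for x K
      using that p(2) unfolding p1_def fine_def \<gamma>_def by fastforce
    then show "(\<Sum>(x, K)\<in>p1. \<bar>f (Sup K) - f (Inf K)\<bar>) \<le> e"
      using small[OF p1] by fastforce
  qed
  finally show ?thesis .
qed

lemma abs_continuous_on_diff_le:
  fixes f f' :: "real \<Rightarrow> real"
  assumes ac: "abs_continuous_on a b f" and cd: "a \<le> c" "c \<le> d" "d \<le> b"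
    and N: "negligible N"
    and der: "\<forall>x\<in>{a..b} - N. (f has_real_derivative f' x) (at x within {a..b})"
    and bound: "\<And>x. x \<in> {c..d} \<Longrightarrow> \<bar>f' x\<bar> \<le> M"
  shows "\<bar>f d - f c\<bar> \<le> M * (d - c)"
proof (rule field_le_epsilon)
  fix \<epsilon> :: real
  assume "\<epsilon> > 0"
  define e where "e = \<epsilon> / (d - c + 1)"
  have "e > 0"
    using \<open>\<epsilon> > 0\<close> cd unfolding e_def by simp
  have "\<bar>f d - f c\<bar> \<le> (M + e) * (d - c) + e"
    by (rule abs_continuous_on_diff_le_approx[OF ac cd N der bound \<open>e > 0\<close>])
  also have "\<dots> = M * (d - c) + e * (d - c + 1)"
    by (simp add: algebra_simps)
  also have "e * (d - c + 1) = \<epsilon>"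
    using cd unfolding e_def by simp
  finally show "\<bar>f d - f c\<bar> \<le> M * (d - c) + \<epsilon>" .
qed

section \<open>Consequences of s-concavity\<close>

lemma s_concave_on_le_midpoint:
  fixes h :: "real \<Rightarrow> real"
  assumes "s_concave_on s I h" "x \<in> I" "y \<in> I" "0 \<le> h y"
  shows "h x \<le> 2 powr s * h ((x + y) / 2)"
proof -
  have "(1/2) powr s * h x + (1/2) powr s * h y \<le> h ((1/2) * x + (1/2) * y)"
    using assms(1,2,3) unfolding s_concave_on_def
    by (meson field_sum_of_halves less_eq_real_def zero_less_divide_1_iff zero_less_numeral)
  moreover have "(1/2 :: real) powr s = 1 / 2 powr s"
    by (simp add: powr_divide)
  ultimately have "h x / 2 powr s + h y / 2 powr s \<le> h ((x + y) / 2)"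
    by (simp add: add_divide_distrib algebra_simps)
  then have "h x / 2 powr s \<le> h ((x + y) / 2)"
    using assms(4) by (smt (verit) divide_nonneg_pos powr_gt_zero)
  then show ?thesis
    by (simp add: divide_le_eq mult.commute)
qed

lemma s_concave_on_abs_powr_le_midpoint:
  fixes g :: "real \<Rightarrow> real"
  assumes "s_concave_on s I (\<lambda>t. \<bar>g t\<bar> powr q)" "q > 0" "x \<in> I" "y \<in> I"
  shows "\<bar>g x\<bar> \<le> 2 powr (s / q) * \<bar>g ((x + y) / 2)\<bar>"
proof -
  have "\<bar>g x\<bar> powr q \<le> 2 powr s * \<bar>g ((x + y) / 2)\<bar> powr q"
    by (rule s_concave_on_le_midpoint[OF assms(1,3,4)]) simp
  then have "(\<bar>g x\<bar> powr q) powr (1 / q) \<le> (2 powr s * \<bar>g ((x + y) / 2)\<bar> powr q) powr (1 / q)"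
    using \<open>q > 0\<close> by (intro powr_mono2) auto
  then show ?thesis
    using \<open>q > 0\<close> by (simp add: powr_powr powr_mult)
qed

lemma abs_continuous_on_diff_le_midpoint:
  fixes f f' :: "real \<Rightarrow> real"
  assumes ac: "abs_continuous_on a b f" and N: "negligible N"
    and der: "\<forall>x\<in>{a..b} - N. (f has_real_derivative f' x) (at x within {a..b})"
    and conc: "s_concave_on s {a..b} (\<lambda>t. \<bar>f' t\<bar> powr q)" and "q > 0"
    and cuvd: "a \<le> c" "c \<le> u" "u \<le> v" "v \<le> d" "d \<le> b"
  shows "\<bar>f v - f u\<bar> \<le> 2 powr (s / q) * \<bar>f' ((c + d) / 2)\<bar> * (v - u)"
proof (rule abs_continuous_on_diff_le[OF ac _ _ _ N der])
  fix x
  assume "x \<in> {u..v}"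
  then have "x \<in> {a..b}" "c + d - x \<in> {a..b}"
    using cuvd by auto
  then show "\<bar>f' x\<bar> \<le> 2 powr (s / q) * \<bar>f' ((c + d) / 2)\<bar>"
    using s_concave_on_abs_powr_le_midpoint[OF conc \<open>q > 0\<close>, of x "c + d - x"] by simp
qed (use cuvd in auto)

section \<open>Integral estimates\<close>

lemma integral_ramp_left:
  fixes L a m :: real
  assumes "a \<le> m"
  shows "integral {a..m} (\<lambda>t. L * (m - t)) = L * (m - a)\<^sup>2 / 2"
proof -
  have "((\<lambda>t. - L * (m - t)\<^sup>2 / 2) has_vector_derivative L * (m - x)) (at x within {a..m})" for x
    by (auto intro!: derivative_eq_intros simp: field_simps simp flip: has_real_derivative_iff_has_vector_derivative)
  from fundamental_theorem_of_calculus[OF assms this]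
  show ?thesis
    by (intro integral_unique) simp
qed

lemma integral_ramp_right:
  fixes L m b :: real
  assumes "m \<le> b"
  shows "integral {m..b} (\<lambda>t. L * (t - m)) = L * (b - m)\<^sup>2 / 2"
proof -
  have "((\<lambda>t. L * (t - m)\<^sup>2 / 2) has_vector_derivative L * (x - m)) (at x within {m..b})" for x
    by (auto intro!: derivative_eq_intros simp: field_simps simp flip: has_real_derivative_iff_has_vector_derivative)
  from fundamental_theorem_of_calculus[OF assms this]
  show ?thesis
    by (intro integral_unique) simp
qed

lemma integrable_continuous_mult_bounded:
  fixes f w :: "real \<Rightarrow> real"
  assumes "continuous_on {a..b} f" "w integrable_on {a..b}" "\<And>t. t \<in> {a..b} \<Longrightarrow> \<bar>w t\<bar> \<le> B"
  shows "(\<lambda>t. f t * w t) integrable_on {a..b}"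
proof -
  have "w absolutely_integrable_on {a..b}"
    using assms(2,3) by (intro absolutely_integrable_integrable_bound[of _ _ "\<lambda>_. B"]) auto
  moreover have "f \<in> borel_measurable (lebesgue_on {a..b})"
    using assms(1) by (intro continuous_imp_measurable_on_sets_lebesgue) auto
  moreover have "bounded (f ` {a..b})"
    using assms(1) by (intro compact_imp_bounded compact_continuous_image) auto
  ultimately have "(\<lambda>t. f t * w t) absolutely_integrable_on {a..b}"
    by (intro absolutely_integrable_bounded_measurable_product_real) auto
  then show ?thesis
    by (simp add: absolutely_integrable_on_def)
qed

lemma abs_integral_le_ramp_left:
  fixes F :: "real \<Rightarrow> real"
  assumes "F integrable_on {a..m}" "a \<le> m" "\<And>t. t \<in> {a..m} \<Longrightarrow> \<bar>F t\<bar> \<le> L * (m - t)"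
  shows "\<bar>integral {a..m} F\<bar> \<le> L * (m - a)\<^sup>2 / 2"
proof -
  have "norm (integral {a..m} F) \<le> integral {a..m} (\<lambda>t. L * (m - t))"
    using assms(3) by (intro integral_norm_bound_integral[OF assms(1)] integrable_continuous_real continuous_intros) auto
  then show ?thesis
    unfolding integral_ramp_left[OF assms(2)] real_norm_def .
qed

lemma abs_integral_le_ramp_right:
  fixes F :: "real \<Rightarrow> real"
  assumes "F integrable_on {m..b}" "m \<le> b" "\<And>t. t \<in> {m..b} \<Longrightarrow> \<bar>F t\<bar> \<le> L * (t - m)"
  shows "\<bar>integral {m..b} F\<bar> \<le> L * (b - m)\<^sup>2 / 2"
proof -
  have "norm (integral {m..b} F) \<le> integral {m..b} (\<lambda>t. L * (t - m))"
    using assms(3) by (intro integral_norm_bound_integral[OF assms(1)] integrable_continuous_real continuous_intros) auto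
  then show ?thesis
    unfolding integral_ramp_right[OF assms(2)] real_norm_def .
qed

lemma abs_integral_deviation_mult_le:
  fixes f w :: "real \<Rightarrow> real"
  assumes m: "a \<le> m" "m \<le> b" and f: "continuous_on {a..b} f"
    and w: "w integrable_on {a..b}" "\<And>t. t \<in> {a..b} \<Longrightarrow> \<bar>w t\<bar> \<le> 1"
    and left: "\<And>t. t \<in> {a..m} \<Longrightarrow> \<bar>f t - f m\<bar> \<le> L1 * (m - t)"
    and right: "\<And>t. t \<in> {m..b} \<Longrightarrow> \<bar>f t - f m\<bar> \<le> L2 * (t - m)"
  shows "\<bar>integral {a..b} (\<lambda>t. (f t - f m) * w t)\<bar> \<le> L1 * (m - a)\<^sup>2 / 2 + L2 * (b - m)\<^sup>2 / 2"
proof -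
  let ?F = "\<lambda>t. (f t - f m) * w t"
  have F: "?F integrable_on {a..b}"
    using f w by (intro integrable_continuous_mult_bounded continuous_intros)
  have F_le: "\<bar>?F t\<bar> \<le> \<bar>f t - f m\<bar>" if "t \<in> {a..b}" for t
    using w(2)[OF that] by (simp add: abs_mult mult_left_le)
  have "\<bar>integral {a..m} ?F\<bar> \<le> L1 * (m - a)\<^sup>2 / 2"
  proof (rule abs_integral_le_ramp_left)
    show "?F integrable_on {a..m}"
      using m by (intro integrable_subinterval_real[OF F]) auto
    show "\<bar>?F t\<bar> \<le> L1 * (m - t)" if "t \<in> {a..m}" for t
      using F_le[of t] left[OF that] that m by auto
  qed (use m in auto)
  moreover have "\<bar>integral {m..b} ?F\<bar> \<le> L2 * (b - m)\<^sup>2 / 2"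
  proof (rule abs_integral_le_ramp_right)
    show "?F integrable_on {m..b}"
      using m by (intro integrable_subinterval_real[OF F]) auto
    show "\<bar>?F t\<bar> \<le> L2 * (t - m)" if "t \<in> {m..b}" for t
      using F_le[of t] right[OF that] that m by auto
  qed (use m in auto)
  moreover have "integral {a..b} ?F = integral {a..m} ?F + integral {m..b} ?F"
    using Henstock_Kurzweil_Integration.integral_combine[OF m F] by simp
  ultimately show ?thesis
    by linarith
qed

lemma integral_mult_indicator_subinterval:
  fixes f :: "real \<Rightarrow> real"
  assumes "{c..d} \<subseteq> {a..b}" "f integrable_on {c..d}"
  shows "(\<lambda>t. f t * indicator {c..d} t) integrable_on {a..b}"
    and "integral {a..b} (\<lambda>t. f t * indicator {c..d} t) = integral {c..d} f"
proof -
  have eq: "{c..d} \<inter> {a..b} = {c..d}"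
    using assms(1) by blast
  show "(\<lambda>t. f t * indicator {c..d} t) integrable_on {a..b}"
    unfolding indicator_times_eq_if integrable_restrict_Int eq by (rule assms(2))
  show "integral {a..b} (\<lambda>t. f t * indicator {c..d} t) = integral {c..d} f"
    unfolding indicator_times_eq_if integral_restrict_Int eq ..
qed

lemma integral_mult_diff_recentre:
  fixes f P Q :: "real \<Rightarrow> real"
  assumes "(\<lambda>t. f t * P t) integrable_on S" "(\<lambda>t. f t * Q t) integrable_on S"
    and "P integrable_on S" "Q integrable_on S" "integral S P = integral S Q"
  shows "integral S (\<lambda>t. f t * P t) - integral S (\<lambda>t. f t * Q t) =
    integral S (\<lambda>t. (f t - c) * (P t - Q t))"
proof -
  have "(\<lambda>t. (f t - c) * (P t - Q t)) = (\<lambda>t. (f t * P t - f t * Q t) - c * (P t - Q t))"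
    by (simp add: fun_eq_iff algebra_simps)
  moreover have "(\<lambda>t. f t * P t - f t * Q t) integrable_on S" "(\<lambda>t. c * (P t - Q t)) integrable_on S"
    using assms(1-4) by (auto intro: integrable_diff integrable_on_mult_right)
  ultimately show ?thesis
    using assms by (simp add: integral_diff integral_mult_right)
qed

lemma integral_subinterval_minus_weighted_le:
  fixes f f' g :: "real \<Rightarrow> real"
  assumes ac: "abs_continuous_on a b f" and N: "negligible N"
    and der: "\<forall>x\<in>{a..b} - N. (f has_real_derivative f' x) (at x within {a..b})"
    and conc: "s_concave_on s {a..b} (\<lambda>t. \<bar>f' t\<bar> powr q)" and "q > 0"
    and g: "g integrable_on {a..b}" "\<forall>t\<in>{a..b}. 0 \<le> g t \<and> g t \<le> 1"
    and cd: "a \<le> c" "c \<le> d" "d \<le> b" "d - c = integral {a..b} g"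
    and m: "a \<le> m" "m \<le> b"
  shows "\<bar>integral {c..d} f - integral {a..b} (\<lambda>t. f t * g t)\<bar>
    \<le> 2 powr (s / q) / 2 * ((m - a)\<^sup>2 * \<bar>f' ((a + m) / 2)\<bar> + (b - m)\<^sup>2 * \<bar>f' ((m + b) / 2)\<bar>)"
proof -
  let ?K = "2 powr (s / q)"
  let ?w = "\<lambda>t. indicator {c..d} t - g t"
  have f: "continuous_on {a..b} f"
    by (rule abs_continuous_on_imp_continuous_on[OF ac])
  have sub: "{c..d} \<subseteq> {a..b}"
    using cd by auto
  have f_cd: "f integrable_on {c..d}"
    by (rule integrable_continuous_real, rule continuous_on_subset[OF f sub])
  have ind: "(indicator {c..d} :: real \<Rightarrow> real) integrable_on {a..b}"
      "integral {a..b} (indicator {c..d} :: real \<Rightarrow> real) = d - c"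
    using integral_mult_indicator_subinterval[OF sub, of "\<lambda>_. 1"] cd by auto
  have fg: "(\<lambda>t. f t * g t) integrable_on {a..b}"
    using f g by (intro integrable_continuous_mult_bounded[where B = 1]) auto
  have "integral {c..d} f - integral {a..b} (\<lambda>t. f t * g t) = integral {a..b} (\<lambda>t. (f t - f m) * ?w t)"
    using integral_mult_diff_recentre[OF integral_mult_indicator_subinterval(1)[OF sub f_cd] fg ind(1) g(1)]
      integral_mult_indicator_subinterval(2)[OF sub f_cd] ind(2) cd(4) by simp
  also have "\<bar>\<dots>\<bar> \<le> ?K * \<bar>f' ((a + m) / 2)\<bar> * (m - a)\<^sup>2 / 2 + ?K * \<bar>f' ((m + b) / 2)\<bar> * (b - m)\<^sup>2 / 2"
  proof (rule abs_integral_deviation_mult_le[OF m f])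
    show "?w integrable_on {a..b}"
      using ind(1) g(1) by (rule integrable_diff)
    show "\<bar>?w t\<bar> \<le> 1" if "t \<in> {a..b}" for t
      using g(2) that by (auto simp: indicator_def)
    show "\<bar>f t - f m\<bar> \<le> ?K * \<bar>f' ((a + m) / 2)\<bar> * (m - t)" if "t \<in> {a..m}" for t
      using abs_continuous_on_diff_le_midpoint[OF ac N der conc \<open>q > 0\<close>, of a t m m] that m
      by (simp add: abs_minus_commute)
    show "\<bar>f t - f m\<bar> \<le> ?K * \<bar>f' ((m + b) / 2)\<bar> * (t - m)" if "t \<in> {m..b}" for t
      using abs_continuous_on_diff_le_midpoint[OF ac N der conc \<open>q > 0\<close>, of m m t b] that m
      by simp
  qed
  also have "\<dots> = ?K / 2 * ((m - a)\<^sup>2 * \<bar>f' ((a + m) / 2)\<bar> + (b - m)\<^sup>2 * \<bar>f' ((m + b) / 2)\<bar>)"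
    by (simp add: algebra_simps)
  finally show ?thesis .
qed

lemma integral_weight_bounds:
  fixes g :: "real \<Rightarrow> real"
  assumes "g integrable_on {a..b}" "\<forall>t\<in>{a..b}. 0 \<le> g t \<and> g t \<le> 1" "a \<le> b"
  shows "0 \<le> integral {a..b} g" "integral {a..b} g \<le> b - a"
  using assms integral_nonneg[OF assms(1)] integral_le[OF assms(1), of "\<lambda>_. 1"] by auto

lemma integral_initial_segment_minus_weighted_le:
  fixes f f' g :: "real \<Rightarrow> real"
  assumes ac: "abs_continuous_on a b f" and N: "negligible N"
    and der: "\<forall>x\<in>{a..b} - N. (f has_real_derivative f' x) (at x within {a..b})"
    and conc: "s_concave_on s {a..b} (\<lambda>t. \<bar>f' t\<bar> powr q)" and "q > 0"
    and g: "g integrable_on {a..b}" "\<forall>t\<in>{a..b}. 0 \<le> g t \<and> g t \<le> 1" and "a \<le> b"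
  defines "lam \<equiv> integral {a..b} g"
  shows "\<bar>integral {a..a+lam} f - integral {a..b} (\<lambda>t. f t * g t)\<bar>
    \<le> 2 powr (s / q) / 2 * (lam\<^sup>2 * \<bar>f' (a + lam / 2)\<bar> + (b - a - lam)\<^sup>2 * \<bar>f' ((a + b + lam) / 2)\<bar>)"
proof -
  have "0 \<le> lam" "lam \<le> b - a"
    using integral_weight_bounds[OF g \<open>a \<le> b\<close>] unfolding lam_def by auto
  then have "\<bar>integral {a..a+lam} f - integral {a..b} (\<lambda>t. f t * g t)\<bar>
      \<le> 2 powr (s / q) / 2 * ((a + lam - a)\<^sup>2 * \<bar>f' ((a + (a + lam)) / 2)\<bar> +
          (b - (a + lam))\<^sup>2 * \<bar>f' ((a + lam + b) / 2)\<bar>)"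
    by (intro integral_subinterval_minus_weighted_le[OF ac N der conc \<open>q > 0\<close> g]) (auto simp: lam_def)
  also have "\<dots> = 2 powr (s / q) / 2 *
      (lam\<^sup>2 * \<bar>f' (a + lam / 2)\<bar> + (b - a - lam)\<^sup>2 * \<bar>f' ((a + b + lam) / 2)\<bar>)"
    by (simp add: add_divide_distrib algebra_simps)
  finally show ?thesis .
qed

lemma integral_final_segment_minus_weighted_le:
  fixes f f' g :: "real \<Rightarrow> real"
  assumes ac: "abs_continuous_on a b f" and N: "negligible N"
    and der: "\<forall>x\<in>{a..b} - N. (f has_real_derivative f' x) (at x within {a..b})"
    and conc: "s_concave_on s {a..b} (\<lambda>t. \<bar>f' t\<bar> powr q)" and "q > 0"
    and g: "g integrable_on {a..b}" "\<forall>t\<in>{a..b}. 0 \<le> g t \<and> g t \<le> 1" and "a \<le> b"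
  defines "lam \<equiv> integral {a..b} g"
  shows "\<bar>integral {a..b} (\<lambda>t. f t * g t) - integral {b-lam..b} f\<bar>
    \<le> 2 powr (s / q) / 2 * (lam\<^sup>2 * \<bar>f' (b - lam / 2)\<bar> + (b - a - lam)\<^sup>2 * \<bar>f' ((a + b - lam) / 2)\<bar>)"
proof -
  have "0 \<le> lam" "lam \<le> b - a"
    using integral_weight_bounds[OF g \<open>a \<le> b\<close>] unfolding lam_def by auto
  then have "\<bar>integral {b-lam..b} f - integral {a..b} (\<lambda>t. f t * g t)\<bar>
      \<le> 2 powr (s / q) / 2 * ((b - lam - a)\<^sup>2 * \<bar>f' ((a + (b - lam)) / 2)\<bar> +
          (b - (b - lam))\<^sup>2 * \<bar>f' ((b - lam + b) / 2)\<bar>)"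
    by (intro integral_subinterval_minus_weighted_le[OF ac N der conc \<open>q > 0\<close> g]) (auto simp: lam_def)
  also have "\<dots> = 2 powr (s / q) / 2 *
      (lam\<^sup>2 * \<bar>f' (b - lam / 2)\<bar> + (b - a - lam)\<^sup>2 * \<bar>f' ((a + b - lam) / 2)\<bar>)"
    by (simp add: add_divide_distrib diff_divide_distrib algebra_simps)
  finally show ?thesis
    by (simp add: abs_minus_commute)
qed

lemma two_powr_div_two_le:
  fixes s q :: real
  assumes "q \<ge> 1"
  shows "2 powr (s / q) / 2 \<le> 2 powr ((s - 1) / q)"
proof -
  have "2 powr (s / q) / 2 = 2 powr (s / q - 1)"
    by (simp add: powr_diff)
  also have "\<dots> \<le> 2 powr ((s - 1) / q)"
    using assms by (intro powr_mono) (simp_all add: field_simps)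
  finally show ?thesis .
qed

theorem theorem2p7:
  fixes a b s q :: real and f f' g :: "real \<Rightarrow> real"
  assumes ab: "0 \<le> a" "a < b"
    and f_int: "f integrable_on {a..b}"
    and g_int: "g integrable_on {a..b}"
    and g_bounds: "\<forall>t\<in>{a..b}. 0 \<le> g t \<and> g t \<le> 1"
    and f_ac: "abs_continuous_on a b f"
    and f'_deriv: "\<exists>N. negligible N \<and>
                     (\<forall>x\<in>{a..b} - N. (f has_real_derivative f' x) (at x within {a..b}))"
    and gf'_int: "(\<lambda>t. g t * f' t) integrable_on {a..b}"
    and s: "0 < s" "s \<le> 1"
    and q: "q > 1"
    and conc: "s_concave_on s {a..b} (\<lambda>t. \<bar>f' t\<bar> powr q)"
  defines "lam \<equiv> integral {a..b} g"
  shows "(\<bar>integral {a..a+lam} f - integral {a..b} (\<lambda>t. f t * g t)\<bar>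
           \<le> 2 powr ((s - 1) / q) *
              (lam\<^sup>2 * \<bar>f' (a + lam / 2)\<bar> + (b - a - lam)\<^sup>2 * \<bar>f' ((a + b + lam) / 2)\<bar>)) \<and>
         (\<bar>integral {a..b} (\<lambda>t. f t * g t) - integral {b-lam..b} f\<bar>
           \<le> 2 powr ((s - 1) / q) *
              (lam\<^sup>2 * \<bar>f' (b - lam / 2)\<bar> + (b - a - lam)\<^sup>2 * \<bar>f' ((a + b - lam) / 2)\<bar>))"
proof -
  obtain N where N: "negligible N"
    and der: "\<forall>x\<in>{a..b} - N. (f has_real_derivative f' x) (at x within {a..b})"
    using f'_deriv by blast
  have C: "2 powr (s / q) / 2 \<le> 2 powr ((s - 1) / q)"
    using q by (intro two_powr_div_two_le) simp
  have "q > 0" "a \<le> b"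
    using q ab by simp_all
  note hyps = f_ac N der conc this(1) g_int g_bounds this(2)
  show ?thesis
  proof
    show "\<bar>integral {a..a+lam} f - integral {a..b} (\<lambda>t. f t * g t)\<bar>
        \<le> 2 powr ((s - 1) / q) *
          (lam\<^sup>2 * \<bar>f' (a + lam / 2)\<bar> + (b - a - lam)\<^sup>2 * \<bar>f' ((a + b + lam) / 2)\<bar>)"
      by (rule order_trans[OF integral_initial_segment_minus_weighted_le[OF hyps, folded lam_def]
            mult_right_mono[OF C]]) simp
    show "\<bar>integral {a..b} (\<lambda>t. f t * g t) - integral {b-lam..b} f\<bar>
        \<le> 2 powr ((s - 1) / q) *
          (lam\<^sup>2 * \<bar>f' (b - lam / 2)\<bar> + (b - a - lam)\<^sup>2 * \<bar>f' ((a + b - lam) / 2)\<bar>)"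
      by (rule order_trans[OF integral_final_segment_minus_weighted_le[OF hyps, folded lam_def]
            mult_right_mono[OF C]]) simp
  qed
qed

end
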